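(* Let $\mathcal{G}$ be a causal graph over a finite set $\mathbf{V}$ of variables with target variable $Y \in \mathbf{V}$ and set of intervenable variables $\mathbf{I} \subseteq \mathbf{V}\setminus\{Y\}$. Suppose that (i) there exists $C \in \mathrm{pa}_{\mathcal{G}}(Y)$ with $C \notin \mathbf{I}$, or (ii) there exists $C \in \mathrm{sp}_{\mathcal{G}}(Y)$. If there exists $X \in \mathrm{an}_{\mathcal{G}}(Y) \cap \mathbf{I}$ such that $\{\langle X, \{C\}\rangle\}$ is a mixed policy scope for $\mathcal{G}$, then there exists at least one structural causal model compatible with $\mathcal{G}$ for which $$\min_{\mathcal{S} \in \Sigma_{\text{hard}},\, \pi_{\mathcal{S}} \in \Pi_{\mathcal{S}}} \mu^Y_{\pi_{\mathcal{S}}} \;>\; \min_{\mathcal{S} \in \Sigma,\, \pi_{\mathcal{S}} \in \Pi_{\mathcal{S}}} \mu^Y_{\pi_{\mathcal{S}}}.$$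
   Context: A structural causal model (SCM) is a tuple $\mathcal{M}=\langle \mathbf{V}, \mathbf{U}, \mathcal{F}, p(\mathbf{U})\rangle$ where $\mathbf{U}$ is a set of mutually independent unobserved exogenous random variables with distribution $p(\mathbf{U})$ and $\mathcal{F}=\{f_V\}_{V\in\mathbf{V}}$ are deterministic functions with $V = f_V(\mathrm{pa}(V), \mathbf{U}_V)$, $\mathrm{pa}(V)\subseteq \mathbf{V}\setminus\{V\}$, $\mathbf{U}_V\subseteq\mathbf{U}$. Its causal graph has nodes $\mathbf{V}$, a directed edge $V\to W$ if $V\in\mathrm{pa}(W)$, and a bidirected edge $V\leftrightarrow W$ if $\mathbf{U}_V\cap\mathbf{U}_W\neq\emptyset$; causal graphs are assumed acyclic (no directed cycles). An SCM is compatible with a causal graph $\mathcal{G}$ over $\mathbf{V}$ if every edge of its causal graph is in $\mathcal{G}$. $\mathrm{pa}_{\mathcal{G}}(V)$, $\mathrm{an}_{\mathcal{G}}(V)$ denote parents and ancestors (nodes with a directed path to $V$) in $\mathcal{G}$; $\mathrm{sp}_{\mathcal{G}}(V)$ denotes nodes joined to $V$ by a bidirected edge. $\mathcal{R}_X$ denotes the range of $X$. A mixed policy scope (MPS) $\mathcal{S}$ for $\mathcal{G}$ is a collection of pairs $\langle X, \mathbf{C}_X\rangle$ with $X\in\mathbf{I}$, $\mathbf{C}_X\subseteq\mathbf{V}\setminus\{X,Y\}$, such that the graph obtained from $\mathcal{G}$ by removing all incoming edges into $X$ and adding directed edges from each element of $\mathbf{C}_X$ to $X$, for every pair in $\mathcal{S}$,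 is acyclic. $\Sigma$ is the set of all MPSs for $\mathcal{G}$ and $\Sigma_{\text{hard}}=\{\mathcal{S}\in\Sigma: \mathbf{C}_X=\emptyset \text{ for all } \langle X,\mathbf{C}_X\rangle\in\mathcal{S}\}$. A deterministic mixed policy (DMP) $\pi_{\mathcal{S}}$ compatible with $\mathcal{S}$ assigns to each $\langle X,\mathbf{C}_X\rangle\in\mathcal{S}$ a function $\pi_{X|\mathbf{C}_X}:\mathcal{R}_{\mathbf{C}_X}\to\mathcal{R}_X$ (a constant value in $\mathcal{R}_X$ when $\mathbf{C}_X=\emptyset$); $\Pi_{\mathcal{S}}$ is the set of such DMPs. Applying $\pi_{\mathcal{S}}$ to an SCM replaces each $f_X$ by $\pi_{X|\mathbf{C}_X}$ (so $X=\pi_{X|\mathbf{C}_X}(\mathbf{C}_X)$), yielding the interventional distribution $p_{\pi_{\mathcal{S}}}(\mathbf{V})$; the target effect is $\mu^Y_{\pi_{\mathcal{S}}}=\mathbb{E}_{p_{\pi_{\mathcal{S}}}}[Y]$. *)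

theory Defs
  imports "HOL-Probability.Probability"
begin

text \<open>Causal graph over the finite variable set V = UNIV :: 'v set.
  D: directed edges (a,b) meaning a \<rightarrow> b; B: bidirected edges (symmetric, irreflexive).\<close>

definition causal_graph :: "('v \<times> 'v) set \<Rightarrow> ('v \<times> 'v) set \<Rightarrow> bool" where
  "causal_graph D B \<longleftrightarrow> acyclic D \<and> sym B \<and> irrefl B"

definition pa_G :: "('v \<times> 'v) set \<Rightarrow> 'v \<Rightarrow> 'v set" where
  "pa_G D v = {w. (w, v) \<in> D}"

definition an_G :: "('v \<times> 'v) set \<Rightarrow> 'v \<Rightarrow> 'v set" where
  "an_G D v = {w. (w, v) \<in> D\<^sup>+}"

definition sp_G :: "('v \<times> 'v) set \<Rightarrow> 'v \<Rightarrow> 'v set" where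
  "sp_G B v = {w. (w, v) \<in> B}"

text \<open>A structural causal model with real-valued endogenous variables, finite ranges,
  finitely many mutually independent exogenous variables indexed by Ex (a finite set of
  naturals), each with a discrete distribution PU e.\<close>

record 'v scm =
  Rng :: "'v \<Rightarrow> real set"
  Ex  :: "nat set"
  PU  :: "nat \<Rightarrow> real pmf"
  Pa  :: "'v \<Rightarrow> 'v set"
  UV  :: "'v \<Rightarrow> nat set"
  Fn  :: "'v \<Rightarrow> ('v \<Rightarrow> real) \<Rightarrow> (nat \<Rightarrow> real) \<Rightarrow> real"

definition scm_graph :: "'v scm \<Rightarrow> ('v \<times> 'v) set" where
  "scm_graph M = {(w, v). w \<in> Pa M v}"

definition wf_scm :: "'v scm \<Rightarrow> bool" where
  "wf_scm M \<longleftrightarrow>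
     finite (Ex M) \<and>
     (\<forall>v. finite (Rng M v) \<and> Rng M v \<noteq> {}) \<and>
     (\<forall>v. UV M v \<subseteq> Ex M) \<and>
     acyclic (scm_graph M) \<and>
     (\<forall>v x x' u u'. (\<forall>w\<in>Pa M v. x w = x' w) \<longrightarrow> (\<forall>e\<in>UV M v. u e = u' e)
         \<longrightarrow> Fn M v x u = Fn M v x' u') \<and>
     (\<forall>v x u. Fn M v x u \<in> Rng M v)"

definition compatible :: "('v \<times> 'v) set \<Rightarrow> ('v \<times> 'v) set \<Rightarrow> 'v scm \<Rightarrow> bool" where
  "compatible D B M \<longleftrightarrow>
     scm_graph M \<subseteq> D \<and>
     (\<forall>v w. v \<noteq> w \<longrightarrow> UV M v \<inter> UV M w \<noteq> {} \<longrightarrow> (v, w) \<in> B)"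

definition mps_graph :: "('v \<times> 'v) set \<Rightarrow> ('v \<rightharpoonup> 'v set) \<Rightarrow> ('v \<times> 'v) set" where
  "mps_graph D S = {(a, b). (a, b) \<in> D \<and> b \<notin> dom S} \<union> {(c, x). \<exists>C. S x = Some C \<and> c \<in> C}"

definition is_mps :: "('v \<times> 'v) set \<Rightarrow> 'v set \<Rightarrow> 'v \<Rightarrow> ('v \<rightharpoonup> 'v set) \<Rightarrow> bool" where
  "is_mps D I Y S \<longleftrightarrow>
     dom S \<subseteq> I \<and>
     (\<forall>X C. S X = Some C \<longrightarrow> C \<subseteq> UNIV - {X, Y}) \<and>
     acyclic (mps_graph D S)"

definition is_hard :: "('v \<rightharpoonup> 'v set) \<Rightarrow> bool" where
  "is_hard S \<longleftrightarrow> (\<forall>X C. S X = Some C \<longrightarrow> C = {})"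

definition is_dmp :: "'v scm \<Rightarrow> ('v \<rightharpoonup> 'v set) \<Rightarrow> ('v \<Rightarrow> ('v \<Rightarrow> real) \<Rightarrow> real) \<Rightarrow> bool" where
  "is_dmp M S \<pi> \<longleftrightarrow>
     (\<forall>X C. S X = Some C \<longrightarrow>
        (\<forall>x x'. (\<forall>c\<in>C. x c = x' c) \<longrightarrow> \<pi> X x = \<pi> X x') \<and>
        (\<forall>x. \<pi> X x \<in> Rng M X))"

definition mech :: "'v scm \<Rightarrow> ('v \<rightharpoonup> 'v set) \<Rightarrow> ('v \<Rightarrow> ('v \<Rightarrow> real) \<Rightarrow> real)
     \<Rightarrow> 'v \<Rightarrow> ('v \<Rightarrow> real) \<Rightarrow> (nat \<Rightarrow> real) \<Rightarrow> real" where
  "mech M S \<pi> v x u = (case S v of None \<Rightarrow> Fn M v x u | Some _ \<Rightarrow> \<pi> v x)"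

text \<open>The (unique, by acyclicity) solution of the intervened structural equations.\<close>
definition solve :: "'v scm \<Rightarrow> ('v \<rightharpoonup> 'v set) \<Rightarrow> ('v \<Rightarrow> ('v \<Rightarrow> real) \<Rightarrow> real)
     \<Rightarrow> (nat \<Rightarrow> real) \<Rightarrow> ('v \<Rightarrow> real)" where
  "solve M S \<pi> u = (THE x. \<forall>v. x v = mech M S \<pi> v x u)"

definition interv_dist :: "'v scm \<Rightarrow> ('v \<rightharpoonup> 'v set) \<Rightarrow> ('v \<Rightarrow> ('v \<Rightarrow> real) \<Rightarrow> real)
     \<Rightarrow> ('v \<Rightarrow> real) pmf" where
  "interv_dist M S \<pi> = map_pmf (solve M S \<pi>) (Pi_pmf (Ex M) 0 (PU M))"

definition mu :: "'v scm \<Rightarrow> ('v \<rightharpoonup> 'v set) \<Rightarrow> ('v \<Rightarrow> ('v \<Rightarrow> real) \<Rightarrow> real) \<Rightarrow> 'v \<Rightarrow> real" where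
  "mu M S \<pi> Y = measure_pmf.expectation (interv_dist M S \<pi>) (\<lambda>x. x Y)"

end

theory Submission
  imports Defs
begin

text \<open>Pick a predecessor tree that connects X to Y along directed paths in the graph, and let every
  node on it copy (the nonzero-indicator of) its predecessor, starting from X = 0. Let C be a fair
  coin, and let Y report whether the value arriving along the tree equals the coin, which it sees
  either through the edge C \<rightarrow> Y or through a shared exogenous variable. A hard intervention
  fixes all values on the tree, independently of the coin, so Y = 1 with probability 1/2.
  The mixed policy X := [C = 0] sends the negated coin down the tree, so Y = 0 almost surely.\<close>

lemma mech_cong:
  assumes "wf_scm M" "compatible D B M" "is_dmp M S \<pi>"
    and "\<And>w. (w, v) \<in> mps_graph D S \<Longrightarrow> x w = x' w"
  shows "mech M S \<pi> v x u = mech M S \<pi> v x' u"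
proof (cases "S v")
  case None
  have "w \<in> Pa M v \<Longrightarrow> (w, v) \<in> mps_graph D S" for w
    using assms(2) None by (auto simp: compatible_def scm_graph_def mps_graph_def)
  with assms(1,4) None show ?thesis
    unfolding mech_def wf_scm_def by (metis option.simps(4))
next
  case (Some C)
  have "c \<in> C \<Longrightarrow> (c, v) \<in> mps_graph D S" for c
    using Some by (auto simp: mps_graph_def)
  with assms(3,4) Some show ?thesis
    unfolding mech_def is_dmp_def by (metis option.simps(5))
qed

text \<open>Acyclicity of the intervened graph lets the structural equations be solved by
  well-founded recursion along it, so the THE in the definition of solve is not vacuous.\<close>

lemma solve_mech:
  fixes D :: "('v::finite \<times> 'v) set"
  assumes M: "wf_scm M" "compatible D B M" and S: "is_mps D I Y S" "is_dmp M S \<pi>"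
  shows "solve M S \<pi> u v = mech M S \<pi> v (solve M S \<pi> u) u"
proof -
  let ?R = "mps_graph D S"
  have wf: "wf ?R"
    using S(1) by (intro finite_acyclic_wf) (simp_all add: is_mps_def)
  define sol where "sol = wfrec ?R (\<lambda>f v. mech M S \<pi> v f u)"
  have sol: "\<forall>v. sol v = mech M S \<pi> v sol u"
  proof
    fix v
    have "sol v = mech M S \<pi> v (cut sol ?R v) u"
      unfolding sol_def by (rule wfrec[OF wf])
    also have "\<dots> = mech M S \<pi> v sol u"
      by (rule mech_cong[OF M S(2)]) (simp add: cut_apply)
    finally show "sol v = mech M S \<pi> v sol u" .
  qed
  have unique: "x = sol" if x: "\<forall>v. x v = mech M S \<pi> v x u" for x
  proof
    show "x v = sol v" for v
    proof (induction v rule: wf_induct[OF wf])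
      case (1 v)
      have "x v = mech M S \<pi> v x u"
        using x by (rule spec)
      also have "\<dots> = mech M S \<pi> v sol u"
        by (rule mech_cong[OF M S(2)]) (use 1 in blast)
      also have "\<dots> = sol v"
        by (rule sol[rule_format, symmetric])
      finally show ?case .
    qed
  qed
  have "solve M S \<pi> u = sol"
    unfolding solve_def
    by (rule the_equality[where P = "\<lambda>x. \<forall>v. x v = mech M S \<pi> v x u", OF sol unique])
  with sol show ?thesis by simp
qed

lemma solve_intervened:
  fixes D :: "('v::finite \<times> 'v) set"
  assumes "wf_scm M" "compatible D B M" "is_mps D I Y S" "is_dmp M S \<pi>" "S v = Some Cs"
  shows "solve M S \<pi> u v = \<pi> v (solve M S \<pi> u)"
  using solve_mech[OF assms(1-4)] assms(5) by (simp add: mech_def)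

lemma solve_not_intervened:
  fixes D :: "('v::finite \<times> 'v) set"
  assumes "wf_scm M" "compatible D B M" "is_mps D I Y S" "is_dmp M S \<pi>" "S v = None"
  shows "solve M S \<pi> u v = Fn M v (solve M S \<pi> u) u"
  using solve_mech[OF assms(1-4)] assms(5) by (simp add: mech_def)

definition fair_coin :: "real pmf" where
  "fair_coin = map_pmf of_bool (bernoulli_pmf (1/2))"

lemma mu_fair_coin:
  assumes "Ex M = {0}" "PU M 0 = fair_coin" "\<And>u. solve M S \<pi> u Y = g (u 0)"
  shows "mu M S \<pi> Y = (g 0 + g 1) / 2"
proof -
  have "mu M S \<pi> Y = measure_pmf.expectation (map_pmf (\<lambda>u. u 0) (Pi_pmf {0} 0 (PU M))) g"
    using assms(1,3) by (simp add: mu_def interv_dist_def)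
  also have "map_pmf (\<lambda>u. u 0) (Pi_pmf {0::nat} 0 (PU M)) = fair_coin"
    using assms(2) by (subst Pi_pmf_component) auto
  finally show ?thesis by (simp add: fair_coin_def)
qed

lemma mu_nonneg:
  assumes "\<And>u. 0 \<le> solve M S \<pi> u Y"
  shows "0 \<le> mu M S \<pi> Y"
  unfolding mu_def interv_dist_def using assms
  by (intro integral_nonneg_AE AE_pmfI) auto

lemma trancl_from_intervened_in_mps_graph:
  assumes "acyclic D" "(X, v) \<in> D\<^sup>+"
  shows "(X, v) \<in> (mps_graph D [X \<mapsto> Cs])\<^sup>+"
  using assms(2)
proof (induction rule: trancl_induct)
  case (base v)
  with assms(1) have "v \<noteq> X" by (auto simp: acyclic_def)
  with base show ?case by (auto simp: mps_graph_def)
next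
  case (step v w)
  have "w \<noteq> X"
    using step.hyps(1,2) assms(1) by (metis acyclic_def trancl.trancl_into_trancl)
  with step have "(v, w) \<in> mps_graph D [X \<mapsto> Cs]" by (auto simp: mps_graph_def)
  with step.IH show ?case by (rule trancl_into_trancl)
qed

lemma mps_context_not_descendant:
  assumes "acyclic D" "is_mps D I Y [X \<mapsto> Cs]" "C \<in> Cs"
  shows "(X, C) \<notin> D\<^sup>+"
proof
  assume "(X, C) \<in> D\<^sup>+"
  then have "(X, C) \<in> (mps_graph D [X \<mapsto> Cs])\<^sup>+"
    by (rule trancl_from_intervened_in_mps_graph[OF assms(1)])
  moreover have "(C, X) \<in> mps_graph D [X \<mapsto> Cs]"
    using assms(3) by (simp add: mps_graph_def)
  ultimately have "(X, X) \<in> (mps_graph D [X \<mapsto> Cs])\<^sup>+"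
    by (rule trancl_into_trancl)
  with assms(2) show False by (simp add: is_mps_def acyclic_def)
qed

definition between :: "('v \<times> 'v) set \<Rightarrow> 'v \<Rightarrow> 'v \<Rightarrow> 'v set" where
  "between D X Y = {v. (X, v) \<in> D\<^sup>* \<and> (v, Y) \<in> D\<^sup>+}"

lemma between_predecessor:
  assumes "(X, Y) \<in> D\<^sup>+" "v \<in> between D X Y - {X} \<or> v = Y"
  shows "\<exists>w\<in>between D X Y. (w, v) \<in> D"
proof -
  have "(X, v) \<in> D\<^sup>+" "(v, Y) \<in> D\<^sup>*"
    using assms by (auto simp: between_def rtrancl_eq_or_trancl)
  then obtain w where "(X, w) \<in> D\<^sup>*" "(w, v) \<in> D" "(w, Y) \<in> D\<^sup>+"
    by (meson rtrancl_into_trancl2 tranclD2)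
  then show ?thesis by (auto simp: between_def)
qed

locale coin_tree_witness =
  fixes D B :: "('v::finite \<times> 'v) set" and I :: "'v set" and Y C X :: 'v
    and A :: "'v set" and p :: "'v \<Rightarrow> 'v" and reads_C :: bool
  assumes acyclic: "acyclic D" and sym_B: "sym B" and Y_not_I: "Y \<notin> I"
    and X_in_A: "X \<in> A" and Y_notin_A: "Y \<notin> A" and C_notin_A: "C \<notin> A" and C_neq_Y: "C \<noteq> Y"
    and pred: "\<And>v. v \<in> A - {X} \<or> v = Y \<Longrightarrow> p v \<in> A \<and> (p v, v) \<in> D"
    and reads_C_edge: "reads_C \<Longrightarrow> (C, Y) \<in> D \<and> C \<notin> I"
    and confounded: "\<not> reads_C \<Longrightarrow> (C, Y) \<in> B"
    and mixed_mps: "is_mps D I Y [X \<mapsto> {C}]"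
begin

definition model :: "'v scm" where
  "model = \<lparr>Rng = \<lambda>v. if v \<in> A \<or> v = C \<or> v = Y then {0, 1} else {0},
     Ex = {0}, PU = \<lambda>_. fair_coin,
     Pa = \<lambda>v. if v = Y then (if reads_C then {p Y, C} else {p Y})
              else if v \<in> A - {X} then {p v} else {},
     UV = \<lambda>v. if v = C \<or> (v = Y \<and> \<not> reads_C) then {0} else {},
     Fn = \<lambda>v x u. if v = Y then of_bool (x (p Y) = (if reads_C then x C else of_bool (u 0 \<noteq> 0)))
              else if v = C then of_bool (u 0 \<noteq> 0)
              else if v \<in> A - {X} then of_bool (x (p v) \<noteq> 0) else 0\<rparr>"

lemma model_simps:
  "Rng model v = (if v \<in> A \<or> v = C \<or> v = Y then {0, 1} else {0})"
  "Ex model = {0}"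
  "PU model e = fair_coin"
  "Pa model v = (if v = Y then (if reads_C then {p Y, C} else {p Y})
     else if v \<in> A - {X} then {p v} else {})"
  "UV model v = (if v = C \<or> (v = Y \<and> \<not> reads_C) then {0} else {})"
  "Fn model v x u = (if v = Y then of_bool (x (p Y) = (if reads_C then x C else of_bool (u 0 \<noteq> 0)))
     else if v = C then of_bool (u 0 \<noteq> 0)
     else if v \<in> A - {X} then of_bool (x (p v) \<noteq> 0) else 0)"
  by (simp_all add: model_def)

lemma scm_graph_model: "scm_graph model \<subseteq> D"
proof
  fix e assume "e \<in> scm_graph model"
  then obtain w v where e: "e = (w, v)" "w \<in> Pa model v"
    by (auto simp: scm_graph_def)
  show "e \<in> D"
  proof (cases "v = Y")
    case True
    with e pred[of Y] reads_C_edge show ?thesis by (auto simp: model_simps split: if_splits)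
  next
    case False
    with e pred[of v] show ?thesis by (auto simp: model_simps split: if_splits)
  qed
qed

lemma wf_model: "wf_scm model"
  unfolding wf_scm_def
proof (intro conjI allI impI)
  show "acyclic (scm_graph model)"
    using acyclic scm_graph_model by (rule acyclic_subset)
  fix v :: 'v and x x' :: "'v \<Rightarrow> real" and u u' :: "nat \<Rightarrow> real"
  assume "\<forall>w\<in>Pa model v. x w = x' w" "\<forall>e\<in>UV model v. u e = u' e"
  then show "Fn model v x u = Fn model v x' u'"
    using C_neq_Y by (auto simp: model_simps)
qed (auto simp: model_simps)

lemma compatible_model: "compatible D B model"
  unfolding compatible_def
proof (intro conjI allI impI scm_graph_model)
  fix v w assume "v \<noteq> w" "UV model v \<inter> UV model w \<noteq> {}"
  then have "\<not> reads_C" "(v, w) = (C, Y) \<or> (v, w) = (Y, C)"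
    by (auto simp: model_simps split: if_splits)
  with confounded sym_B show "(v, w) \<in> B"
    by (auto simp: sym_def)
qed

lemma solve_model_Y:
  assumes "is_mps D I Y S" "is_dmp model S \<pi>"
  shows "solve model S \<pi> u Y = of_bool (solve model S \<pi> u (p Y) = of_bool (u 0 \<noteq> 0))"
proof -
  have not_I: "S v = None" if "v \<notin> I" for v
    using assms(1) that by (auto simp: is_mps_def)
  have "solve model S \<pi> u C = of_bool (u 0 \<noteq> 0)" if reads_C
    using solve_not_intervened[OF wf_model compatible_model assms not_I] reads_C_edge[OF that] C_neq_Y
    by (simp add: model_simps)
  then show ?thesis
    using solve_not_intervened[OF wf_model compatible_model assms not_I[OF Y_not_I]]
    by (simp add: model_simps)
qed

lemma hard_solve_model_const:
  assumes S: "is_mps D I Y S" "is_hard S" "is_dmp model S \<pi>" and "v \<in> A"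
  shows "\<exists>c\<in>{0, 1}. \<forall>u. solve model S \<pi> u v = c"
  using \<open>v \<in> A\<close>
proof (induction v rule: wf_induct[OF finite_acyclic_wf[OF finite acyclic]])
  case (1 v)
  show ?case
  proof (cases "S v")
    case (Some Cs)
    with S(2) have "Cs = {}" by (simp add: is_hard_def)
    with S(3) Some have const: "\<pi> v x = \<pi> v (\<lambda>_. 0)" and rng: "\<pi> v (\<lambda>_. 0) \<in> Rng model v" for x
      unfolding is_dmp_def by blast+
    have "solve model S \<pi> u v = \<pi> v (\<lambda>_. 0)" for u
      using solve_intervened[OF wf_model compatible_model S(1,3) Some] const by simp
    moreover have "\<pi> v (\<lambda>_. 0) \<in> {0, 1}"
      using rng "1.prems" by (simp add: model_simps)
    ultimately show ?thesis by blast
  next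
    case None
    note solve_v = solve_not_intervened[OF wf_model compatible_model S(1,3) None]
    show ?thesis
    proof (cases "v = X")
      case True
      with solve_v X_in_A Y_notin_A C_notin_A show ?thesis by (auto simp: model_simps)
    next
      case False
      with "1.prems" pred have "p v \<in> A" "(p v, v) \<in> D" by auto
      with "1.IH" obtain c where "\<forall>u. solve model S \<pi> u (p v) = c" by blast
      with solve_v False "1.prems" Y_notin_A C_notin_A show ?thesis
        by (auto simp: model_simps)
    qed
  qed
qed

lemma mu_hard:
  assumes "is_mps D I Y S" "is_hard S" "is_dmp model S \<pi>"
  shows "mu model S \<pi> Y = 1/2"
proof -
  obtain c where "c \<in> {0, 1}" "\<forall>u. solve model S \<pi> u (p Y) = c"
    using hard_solve_model_const[OF assms] pred[of Y] by blast
  with solve_model_Y[OF assms(1,3)]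
  have "solve model S \<pi> u Y = of_bool (c = of_bool (u 0 \<noteq> 0))" for u
    by simp
  from mu_fair_coin[OF model_simps(2,3) this] \<open>c \<in> {0, 1}\<close> show ?thesis by auto
qed

definition mixed_scope :: "'v \<rightharpoonup> 'v set" where
  "mixed_scope = [X \<mapsto> {C}]"

lemma mixed_scope_apply: "mixed_scope v = (if v = X then Some {C} else None)"
  by (simp add: mixed_scope_def)

lemma mixed_scope_mps: "is_mps D I Y mixed_scope"
  using mixed_mps by (simp add: mixed_scope_def)

definition mixed_policy :: "'v \<Rightarrow> ('v \<Rightarrow> real) \<Rightarrow> real" where
  "mixed_policy v x = of_bool (x C = 0)"

lemma mixed_policy_dmp: "is_dmp model mixed_scope mixed_policy"
  using X_in_A by (auto simp: is_dmp_def mixed_scope_apply mixed_policy_def model_simps)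

lemma mixed_solve_model:
  assumes "v \<in> A"
  shows "solve model mixed_scope mixed_policy u v = of_bool (u 0 = 0)"
proof -
  define x where "x = solve model mixed_scope mixed_policy u"
  note solve_rules = wf_model compatible_model mixed_scope_mps mixed_policy_dmp
  have Fn: "x w = Fn model w x u" if "w \<noteq> X" for w
    unfolding x_def by (rule solve_not_intervened[OF solve_rules]) (use that in \<open>simp add: mixed_scope_apply\<close>)
  have "C \<noteq> X"
    using X_in_A C_notin_A by blast
  with Fn C_neq_Y have "x C = of_bool (u 0 \<noteq> 0)"
    by (simp add: model_simps)
  moreover have "x X = mixed_policy X x"
    unfolding x_def by (rule solve_intervened[OF solve_rules]) (simp add: mixed_scope_apply)
  ultimately have x_X: "x X = of_bool (u 0 = 0)"
    by (simp add: mixed_policy_def)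
  have "x v = of_bool (u 0 = 0)"
    using assms
  proof (induction v rule: wf_induct[OF finite_acyclic_wf[OF finite acyclic]])
    case (1 v)
    show ?case
    proof (cases "v = X")
      case True
      with x_X show ?thesis by simp
    next
      case False
      with "1.prems" pred have "p v \<in> A" "(p v, v) \<in> D" by auto
      moreover have "v \<noteq> Y" "v \<noteq> C"
        using "1.prems" Y_notin_A C_notin_A by auto
      ultimately show ?thesis
        using "1.IH" Fn[OF False] False "1.prems" by (simp add: model_simps)
    qed
  qed
  then show ?thesis by (simp add: x_def)
qed

lemma mu_mixed: "mu model mixed_scope mixed_policy Y = 0"
proof -
  have "solve model mixed_scope mixed_policy u Y = 0" for u
    using solve_model_Y[OF mixed_scope_mps mixed_policy_dmp] mixed_solve_model pred[of Y] by simp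
  from mu_fair_coin[OF model_simps(2,3), of _ _ Y "\<lambda>_. 0"] this show ?thesis by simp
qed

lemma Inf_hard_gt_Inf_mixed:
  "Inf {mu model S \<pi> Y | S \<pi>. is_mps D I Y S \<and> is_hard S \<and> is_dmp model S \<pi>}
   > Inf {mu model S \<pi> Y | S \<pi>. is_mps D I Y S \<and> is_dmp model S \<pi>}"
  (is "Inf ?hard > Inf ?all")
proof -
  have empty: "is_mps D I Y Map.empty" "is_hard Map.empty" "is_dmp model Map.empty (\<lambda>_ _. 0)"
    using acyclic by (simp_all add: is_mps_def mps_graph_def is_hard_def is_dmp_def)
  have "?hard = {1/2}"
  proof
    show "?hard \<subseteq> {1/2}"
      using mu_hard by blast
    have "mu model Map.empty (\<lambda>_ _. 0) Y \<in> ?hard"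
      using empty by blast
    then show "{1/2} \<subseteq> ?hard"
      using mu_hard[OF empty] by simp
  qed
  moreover have "Inf ?all \<le> 0"
  proof (rule cInf_lower)
    have "mu model mixed_scope mixed_policy Y \<in> ?all"
      using mixed_scope_mps mixed_policy_dmp by blast
    then show "0 \<in> ?all"
      by (simp add: mu_mixed)
    show "bdd_below ?all"
    proof (rule bdd_belowI)
      fix m assume "m \<in> ?all"
      then obtain S \<pi> where m: "m = mu model S \<pi> Y" and S: "is_mps D I Y S" "is_dmp model S \<pi>"
        by blast
      have "0 \<le> mu model S \<pi> Y"
        by (rule mu_nonneg) (simp add: solve_model_Y[OF S])
      with m show "0 \<le> m" by simp
    qed
  qed
  ultimately show ?thesis by simp
qed

end

theorem proposition1:
  fixes D B :: "('v::finite \<times> 'v) set" and I :: "'v set" and Y C X :: 'v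
  assumes "causal_graph D B"
    and "I \<subseteq> UNIV - {Y}"
    and "(C \<in> pa_G D Y \<and> C \<notin> I) \<or> C \<in> sp_G B Y"
    and "X \<in> an_G D Y \<inter> I"
    and "is_mps D I Y [X \<mapsto> {C}]"
  shows "\<exists>M :: 'v scm. wf_scm M \<and> compatible D B M \<and>
    Inf {mu M S \<pi> Y | S \<pi>. is_mps D I Y S \<and> is_hard S \<and> is_dmp M S \<pi>}
    > Inf {mu M S \<pi> Y | S \<pi>. is_mps D I Y S \<and> is_dmp M S \<pi>}"
proof -
  have acyclic: "acyclic D" and "sym B"
    using assms(1) by (auto simp: causal_graph_def)
  have XY: "(X, Y) \<in> D\<^sup>+"
    using assms(4) by (simp add: an_G_def)
  have "{C} \<subseteq> UNIV - {X, Y}"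
    using assms(5) unfolding is_mps_def by (metis fun_upd_same)
  then have "C \<noteq> X" "C \<noteq> Y"
    by auto
  moreover have "(X, C) \<notin> D\<^sup>+"
    using mps_context_not_descendant[OF acyclic assms(5)] by simp
  ultimately have "X \<in> between D X Y" "Y \<notin> between D X Y" "C \<notin> between D X Y"
    using XY acyclic by (auto simp: between_def acyclic_def rtrancl_eq_or_trancl)
  moreover obtain p where
    "\<And>v. v \<in> between D X Y - {X} \<or> v = Y \<Longrightarrow> p v \<in> between D X Y \<and> (p v, v) \<in> D"
    using between_predecessor[OF XY] by metis
  ultimately interpret coin_tree_witness D B I Y C X "between D X Y" p "C \<in> pa_G D Y \<and> C \<notin> I"
    using acyclic \<open>sym B\<close> assms(2,3,5) \<open>C \<noteq> Y\<close>
    by unfold_locales (auto simp: pa_G_def sp_G_def)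
  show ?thesis
    using wf_model compatible_model Inf_hard_gt_Inf_mixed by blast
qed

end
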